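(* Suppose $\sigma$ is an automorphism of $D$ and $f(t)=t^m-a\in D[t;\sigma]$ with $a\in D$. Then $f$ has a left divisor of degree $1$ if and only if it has a right divisor of degree $1$.
   Context: $D$ is an associative division ring, $\sigma$ a ring automorphism of $D$, and $D[t;\sigma]$ the skew polynomial ring with $ta=\sigma(a)t$. A left (resp. right) divisor $g$ of $f$ means $f=gq$ (resp. $f=qg$) for some $q\in D[t;\sigma]$. *)

theory Defs
  imports "HOL-Computational_Algebra.Polynomial"
begin

text \<open>Skew polynomials in D[t;sigma] are represented by their coefficient sequences,
  using the type 'a poly (finitely supported coefficients, with degree); only the
  multiplication differs from the commutative one: t a = sigma(a) t, so
  (sum a_i t^i)(sum b_j t^j) has k-th coefficient sum_{i<=k} a_i sigma^i(b_{k-i}).\<close>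

definition ring_automorphism :: "('a::division_ring \<Rightarrow> 'a) \<Rightarrow> bool" where
  "ring_automorphism \<sigma> \<longleftrightarrow> bij \<sigma> \<and> (\<forall>x y. \<sigma> (x + y) = \<sigma> x + \<sigma> y)
     \<and> (\<forall>x y. \<sigma> (x * y) = \<sigma> x * \<sigma> y) \<and> \<sigma> 1 = 1"

definition skew_mult_coeff :: "('a::division_ring \<Rightarrow> 'a) \<Rightarrow> 'a poly \<Rightarrow> 'a poly \<Rightarrow> nat \<Rightarrow> 'a" where
  "skew_mult_coeff \<sigma> p q k = (\<Sum>i\<le>k. coeff p i * (\<sigma> ^^ i) (coeff q (k - i)))"

definition skew_left_dvd :: "('a::division_ring \<Rightarrow> 'a) \<Rightarrow> 'a poly \<Rightarrow> 'a poly \<Rightarrow> bool" where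
  "skew_left_dvd \<sigma> g f \<longleftrightarrow> (\<exists>q. \<forall>k. coeff f k = skew_mult_coeff \<sigma> g q k)"

definition skew_right_dvd :: "('a::division_ring \<Rightarrow> 'a) \<Rightarrow> 'a poly \<Rightarrow> 'a poly \<Rightarrow> bool" where
  "skew_right_dvd \<sigma> g f \<longleftrightarrow> (\<exists>q. \<forall>k. coeff f k = skew_mult_coeff \<sigma> q g k)"

end

theory Submission
  imports Defs
begin

(* Both conditions are equivalent to a being a norm N_m(c) = sigma^(m-1)(c) ... sigma(c) c.
   If a = N_m(c), then t - c is a right divisor and t - sigma^(m-1)(c) a left divisor of t^m - a,
   with quotients whose coefficients are partial products of the same kind.  Conversely, comparing
   coefficients in t^m - a = g q (or q g) with deg g = 1 gives a first-order recurrence for suitably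
   rescaled coefficients of q.  As q has finite degree they vanish from degree m on, so descending
   from degree m - 1, where the value is 1, they are forced to be partial norms, and the constant
   coefficient exhibits a as a norm.  Surjectivity of sigma is what makes the rescaling possible in
   the left-handed case, where sigma acts on the coefficients of q. *)

lemma ring_automorphismD:
  assumes "ring_automorphism \<sigma>"
  shows "\<sigma> (x + y) = \<sigma> x + \<sigma> y" "\<sigma> (x * y) = \<sigma> x * \<sigma> y" "\<sigma> 1 = 1" "bij \<sigma>"
  using assms unfolding ring_automorphism_def by auto

lemma ring_automorphism_additive: "ring_automorphism \<sigma> \<Longrightarrow> additive \<sigma>"
  by (simp add: additive.intro ring_automorphismD(1))

lemma ring_automorphism_0: "ring_automorphism \<sigma> \<Longrightarrow> \<sigma> 0 = 0"
  by (rule additive.zero[OF ring_automorphism_additive])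

lemma ring_automorphism_minus: "ring_automorphism \<sigma> \<Longrightarrow> \<sigma> (- x) = - \<sigma> x"
  by (rule additive.minus[OF ring_automorphism_additive])

lemma ring_automorphism_surj: "ring_automorphism \<sigma> \<Longrightarrow> surj \<sigma>"
  by (rule bij_is_surj[OF ring_automorphismD(4)])

lemma ring_automorphism_eq_iff: "ring_automorphism \<sigma> \<Longrightarrow> \<sigma> x = \<sigma> y \<longleftrightarrow> x = y"
  using ring_automorphismD(4) by (metis bij_def inj_eq)

lemma ring_automorphism_eq_0_iff: "ring_automorphism \<sigma> \<Longrightarrow> \<sigma> x = 0 \<longleftrightarrow> x = 0"
  using ring_automorphism_eq_iff ring_automorphism_0 by metis

lemma ring_automorphism_funpow:
  assumes "ring_automorphism \<sigma>"
  shows "ring_automorphism (\<sigma> ^^ n)"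
proof -
  have "bij (\<sigma> ^^ n)"
    using bij_betw_funpow[OF ring_automorphismD(4)[OF assms]] .
  moreover have "(\<forall>x y. (\<sigma> ^^ n) (x + y) = (\<sigma> ^^ n) x + (\<sigma> ^^ n) y)
      \<and> (\<forall>x y. (\<sigma> ^^ n) (x * y) = (\<sigma> ^^ n) x * (\<sigma> ^^ n) y) \<and> (\<sigma> ^^ n) 1 = 1"
    by (induction n) (simp_all add: ring_automorphismD[OF assms])
  ultimately show ?thesis
    unfolding ring_automorphism_def by blast
qed

(* orbit_prod sigma c i n = sigma^(i+n-1)(c) ... sigma^(i+1)(c) sigma^i(c), so that
   orbit_prod sigma c 0 m is the norm N_m(c) of the paper. *)
fun orbit_prod :: "('a::monoid_mult \<Rightarrow> 'a) \<Rightarrow> 'a \<Rightarrow> nat \<Rightarrow> nat \<Rightarrow> 'a" where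
  "orbit_prod \<sigma> c i 0 = 1"
| "orbit_prod \<sigma> c i (Suc n) = (\<sigma> ^^ (i + n)) c * orbit_prod \<sigma> c i n"

lemma orbit_prod_Suc': "orbit_prod \<sigma> c i (Suc n) = orbit_prod \<sigma> c (Suc i) n * (\<sigma> ^^ i) c"
  by (induction n) (simp_all add: mult.assoc)

lemma orbit_prod_shift:
  "ring_automorphism \<sigma> \<Longrightarrow> \<sigma> (orbit_prod \<sigma> c i n) = orbit_prod \<sigma> c (Suc i) n"
  by (induction n) (simp_all add: ring_automorphismD)

lemma orbit_prod_left_step:
  assumes "ring_automorphism \<sigma>" and "k < n"
  shows "\<sigma> (orbit_prod \<sigma> c k (n - k)) = (\<sigma> ^^ n) c * orbit_prod \<sigma> c (Suc k) (n - Suc k)"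
proof -
  have "n - k = Suc (n - Suc k)" and "Suc k + (n - Suc k) = n"
    using assms(2) by simp_all
  have "\<sigma> (orbit_prod \<sigma> c k (n - k)) = orbit_prod \<sigma> c (Suc k) (Suc (n - Suc k))"
    by (simp only: \<open>n - k = Suc (n - Suc k)\<close> orbit_prod_shift[OF assms(1)])
  also have "\<dots> = (\<sigma> ^^ n) c * orbit_prod \<sigma> c (Suc k) (n - Suc k)"
    by (simp only: orbit_prod.simps(2) \<open>Suc k + (n - Suc k) = n\<close>)
  finally show ?thesis .
qed

lemma orbit_prod_right_step:
  assumes "k < n"
  shows "orbit_prod \<sigma> c (Suc k) (n - k) = orbit_prod \<sigma> c (Suc (Suc k)) (n - Suc k) * (\<sigma> ^^ Suc k) c"
proof -
  have "n - k = Suc (n - Suc k)"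
    using assms by simp
  then show ?thesis
    by (simp only: orbit_prod_Suc')
qed

lemma left_recurrence_imp_orbit_prod:
  assumes \<sigma>: "ring_automorphism \<sigma>"
    and top: "w n = 1"
    and rec: "\<And>k. k < n \<Longrightarrow> \<sigma> (w k) = (\<sigma> ^^ n) c * w (Suc k)"
    and "k \<le> n"
  shows "w k = orbit_prod \<sigma> c k (n - k)"
  using \<open>k \<le> n\<close>
proof (induction k rule: inc_induct)
  case base
  then show ?case using top by simp
next
  case (step k)
  have "\<sigma> (w k) = \<sigma> (orbit_prod \<sigma> c k (n - k))"
    using rec[OF step.hyps(2)] step.IH orbit_prod_left_step[OF \<sigma> step.hyps(2)] by simp
  then show ?case
    using ring_automorphism_eq_iff[OF \<sigma>] by blast
qed

lemma right_recurrence_imp_orbit_prod: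
  assumes top: "u n = 1"
    and rec: "\<And>k. k < n \<Longrightarrow> u k = u (Suc k) * (\<sigma> ^^ Suc k) c"
    and "k \<le> n"
  shows "u k = orbit_prod \<sigma> c (Suc k) (n - k)"
  using \<open>k \<le> n\<close>
proof (induction k rule: inc_induct)
  case base
  then show ?case using top by simp
next
  case (step k)
  then show ?case
    using rec[OF step.hyps(2)] orbit_prod_right_step[OF step.hyps(2)] by metis
qed

lemma orbit_prod_solves_left_recurrence:
  assumes \<sigma>: "ring_automorphism \<sigma>"
    and w: "\<And>k. w k = (if k \<le> n then orbit_prod \<sigma> c k (n - k) else 0)"
  shows "\<sigma> (w j) - (\<sigma> ^^ n) c * w (Suc j) = of_bool (j = n)"
proof -
  consider "j < n" | "j = n" | "n < j" by linarith
  then show ?thesis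
  proof cases
    case 1
    then show ?thesis
      using orbit_prod_left_step[OF \<sigma> 1] by (simp add: w)
  next
    case 2
    then show ?thesis
      by (simp add: w ring_automorphismD(3)[OF \<sigma>])
  next
    case 3
    then show ?thesis
      by (simp add: w ring_automorphism_0[OF \<sigma>])
  qed
qed

lemma orbit_prod_solves_right_recurrence:
  fixes c :: "'a::ring_1"
  assumes u: "\<And>k. u k = (if k \<le> n then orbit_prod \<sigma> c (Suc k) (n - k) else 0)"
  shows "u j - u (Suc j) * (\<sigma> ^^ Suc j) c = of_bool (j = n)"
proof -
  consider "j < n" | "j = n" | "n < j" by linarith
  then show ?thesis
  proof cases
    case 1
    then show ?thesis
      using orbit_prod_right_step[OF 1] by (simp add: u del: funpow.simps)
  qed (simp_all add: u)
qed

lemma norm_of_left_recurrence: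
  assumes \<sigma>: "ring_automorphism \<sigma>"
    and rec: "\<And>k. of_bool (Suc k = m) = \<sigma> (w k) - b * w (Suc k)"
    and const: "of_bool (m = 0) - a = - b * w 0"
    and top: "\<And>k. m \<le> k \<Longrightarrow> w k = 0"
  shows "\<exists>c. a = orbit_prod \<sigma> c 0 m"
proof (cases m)
  case 0
  then show ?thesis
    using const top[of 0] by simp
next
  case (Suc n)
  obtain c where c: "b = (\<sigma> ^^ n) c"
    using surjD[OF ring_automorphism_surj[OF ring_automorphism_funpow[OF \<sigma>]]] by blast
  have "w k = orbit_prod \<sigma> c k (n - k)" if "k \<le> n" for k
  proof (rule left_recurrence_imp_orbit_prod[OF \<sigma> _ _ that])
    have "\<sigma> (w n) = 1"
      using rec[of n] top[of "Suc n"] Suc by simp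
    then show "w n = 1"
      using ring_automorphismD(3)[OF \<sigma>] ring_automorphism_eq_iff[OF \<sigma>] by metis
    show "\<sigma> (w k) = (\<sigma> ^^ n) c * w (Suc k)" if "k < n" for k
      using rec[of k] that Suc c by simp
  qed
  then have "a = orbit_prod \<sigma> c 0 m"
    using const c Suc by simp
  then show ?thesis ..
qed

lemma norm_of_right_recurrence:
  fixes u :: "nat \<Rightarrow> 'a::ring_1"
  assumes rec: "\<And>k. of_bool (Suc k = m) = u k - u (Suc k) * (\<sigma> ^^ Suc k) c"
    and const: "of_bool (m = 0) - a = - u 0 * c"
    and top: "\<And>k. m \<le> k \<Longrightarrow> u k = 0"
  shows "\<exists>c. a = orbit_prod \<sigma> c 0 m"
proof (cases m)
  case 0
  then show ?thesis
    using const top[of 0] by simp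
next
  case (Suc n)
  have "u k = orbit_prod \<sigma> c (Suc k) (n - k)" if "k \<le> n" for k
  proof (rule right_recurrence_imp_orbit_prod[OF _ _ that])
    show "u n = 1"
      using rec[of n] top[of "Suc n"] Suc by simp
    show "u k = u (Suc k) * (\<sigma> ^^ Suc k) c" if "k < n" for k
      using rec[of k] that Suc by (simp del: funpow.simps)
  qed
  then have "a = orbit_prod \<sigma> c (Suc 0) n * c"
    using const Suc by simp
  then have "a = orbit_prod \<sigma> c 0 m"
    by (simp only: Suc orbit_prod_Suc' funpow_0)
  then show ?thesis ..
qed

lemma coeff_eq_0_downward:
  assumes "\<And>j. M \<le> j \<Longrightarrow> coeff q (Suc j) = 0 \<Longrightarrow> coeff q j = 0" and "M \<le> j"
  shows "coeff q j = 0"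
proof (cases "M \<le> degree q")
  case True
  then have "lead_coeff q = 0"
    using assms(1) by (simp add: coeff_eq_0)
  then show ?thesis by simp
next
  case False
  then show ?thesis
    using assms(2) by (simp add: coeff_eq_0)
qed

lemma coeff_1_neq_0_if_degree_1: "degree g = 1 \<Longrightarrow> coeff g 1 \<noteq> 0"
  by (metis degree_0 leading_coeff_0_iff zero_neq_one)

lemma coeff_monom_minus_const_0: "coeff (monom 1 m - [:a:]) 0 = of_bool (m = 0) - a"
  by simp

lemma coeff_monom_minus_const_Suc: "coeff (monom 1 m - [:a:]) (Suc k) = of_bool (Suc k = m)"
  by simp

lemma skew_mult_coeff_0: "skew_mult_coeff \<sigma> p q 0 = coeff p 0 * coeff q 0"
  by (simp add: skew_mult_coeff_def)

lemma skew_mult_coeff_linear_left_Suc: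
  assumes "degree g \<le> 1"
  shows "skew_mult_coeff \<sigma> g q (Suc k) = coeff g 0 * coeff q (Suc k) + coeff g 1 * \<sigma> (coeff q k)"
proof -
  have "coeff g (Suc (Suc i)) = 0" for i
    using assms by (simp add: coeff_eq_0)
  then show ?thesis
    by (cases k) (simp_all add: skew_mult_coeff_def sum.atMost_Suc_shift del: sum.atMost_Suc)
qed

lemma skew_mult_coeff_linear_right_Suc:
  assumes "degree g \<le> 1" and "ring_automorphism \<sigma>"
  shows "skew_mult_coeff \<sigma> q g (Suc k)
    = coeff q (Suc k) * (\<sigma> ^^ Suc k) (coeff g 0) + coeff q k * (\<sigma> ^^ k) (coeff g 1)"
proof -
  have "(\<sigma> ^^ i) (coeff g j) = 0" if "j > 1" for i j
    using assms that ring_automorphism_0[OF ring_automorphism_funpow] by (simp add: coeff_eq_0)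
  then have "(\<Sum>i<k. coeff q i * (\<sigma> ^^ i) (coeff g (Suc k - i))) = 0"
    by (intro sum.neutral) auto
  then show ?thesis
    by (simp add: skew_mult_coeff_def atMost_Suc lessThan_Suc_atMost[symmetric])
qed

lemma skew_left_dvd_zero:
  assumes "ring_automorphism \<sigma>"
  shows "skew_left_dvd \<sigma> g 0"
proof -
  have "(\<sigma> ^^ i) 0 = 0" for i
    using ring_automorphism_0[OF ring_automorphism_funpow[OF assms]] .
  then show ?thesis
    unfolding skew_left_dvd_def skew_mult_coeff_def by (intro exI[of _ 0]) simp
qed

lemma skew_right_dvd_zero: "skew_right_dvd \<sigma> g 0"
  unfolding skew_right_dvd_def skew_mult_coeff_def by (intro exI[of _ 0]) simp

lemma ex_linear_skew_left_dvd_if_norm: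
  assumes \<sigma>: "ring_automorphism \<sigma>" and a: "a = orbit_prod \<sigma> c 0 m"
  shows "\<exists>g. degree g = 1 \<and> skew_left_dvd \<sigma> g (monom 1 m - [:a:])"
proof (cases m)
  case 0
  then have "monom 1 m - [:a:] = 0"
    using a by (simp add: monom_0)
  moreover have "degree [:0, 1::'a:] = 1"
    by simp
  ultimately show ?thesis
    using skew_left_dvd_zero[OF \<sigma>] by metis
next
  case (Suc n)
  define b where "b = (\<sigma> ^^ n) c"
  define q where "q = Abs_poly (\<lambda>k. if k \<le> n then orbit_prod \<sigma> c k (n - k) else 0)"
  have q: "coeff q k = (if k \<le> n then orbit_prod \<sigma> c k (n - k) else 0)" for k
    unfolding q_def coeff_Abs_poly_If_le ..
  have "coeff (monom 1 m - [:a:]) k = skew_mult_coeff \<sigma> [:-b, 1:] q k" for k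
  proof (cases k)
    case 0
    then show ?thesis
      using a Suc by (simp add: skew_mult_coeff_0 coeff_monom_minus_const_0 q b_def)
  next
    case (Suc j)
    have "skew_mult_coeff \<sigma> [:-b, 1:] q (Suc j) = \<sigma> (coeff q j) - b * coeff q (Suc j)"
      by (simp add: skew_mult_coeff_linear_left_Suc)
    also have "\<dots> = of_bool (j = n)"
      unfolding b_def by (rule orbit_prod_solves_left_recurrence[OF \<sigma> q])
    finally show ?thesis
      using Suc \<open>m = Suc n\<close> by (simp add: coeff_monom_minus_const_Suc)
  qed
  moreover have "degree [:-b, 1:] = 1"
    by simp
  ultimately show ?thesis
    unfolding skew_left_dvd_def by blast
qed

lemma ex_linear_skew_right_dvd_if_norm:
  assumes \<sigma>: "ring_automorphism \<sigma>" and a: "a = orbit_prod \<sigma> c 0 m"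
  shows "\<exists>g. degree g = 1 \<and> skew_right_dvd \<sigma> g (monom 1 m - [:a:])"
proof (cases m)
  case 0
  then have "monom 1 m - [:a:] = 0"
    using a by (simp add: monom_0)
  moreover have "degree [:0, 1::'a:] = 1"
    by simp
  ultimately show ?thesis
    using skew_right_dvd_zero by metis
next
  case (Suc n)
  note \<sigma>k = ring_automorphism_funpow[OF \<sigma>]
  define q where "q = Abs_poly (\<lambda>k. if k \<le> n then orbit_prod \<sigma> c (Suc k) (n - k) else 0)"
  have q: "coeff q k = (if k \<le> n then orbit_prod \<sigma> c (Suc k) (n - k) else 0)" for k
    unfolding q_def coeff_Abs_poly_If_le ..
  have "coeff (monom 1 m - [:a:]) k = skew_mult_coeff \<sigma> q [:-c, 1:] k" for k
  proof (cases k)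
    case 0
    have "a = orbit_prod \<sigma> c (Suc 0) n * c"
      by (simp only: a Suc orbit_prod_Suc' funpow_0)
    then show ?thesis
      using 0 Suc by (simp add: skew_mult_coeff_0 coeff_monom_minus_const_0 q)
  next
    case (Suc j)
    have "skew_mult_coeff \<sigma> q [:-c, 1:] (Suc j) = coeff q j - coeff q (Suc j) * (\<sigma> ^^ Suc j) c"
      using ring_automorphism_minus[OF \<sigma>k] ring_automorphismD(3)[OF \<sigma>k]
      by (simp add: skew_mult_coeff_linear_right_Suc \<sigma> del: funpow.simps)
    also have "\<dots> = of_bool (j = n)"
      by (rule orbit_prod_solves_right_recurrence[OF q])
    finally show ?thesis
      using Suc \<open>m = Suc n\<close> by (simp add: coeff_monom_minus_const_Suc)
  qed
  moreover have "degree [:-c, 1:] = 1"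
    by simp
  ultimately show ?thesis
    unfolding skew_right_dvd_def by blast
qed

lemma norm_if_linear_skew_left_dvd:
  assumes \<sigma>: "ring_automorphism \<sigma>" and g: "degree g = 1"
    and dvd: "skew_left_dvd \<sigma> g (monom 1 m - [:a:])"
  shows "\<exists>c. a = orbit_prod \<sigma> c 0 m"
proof -
  obtain q where q: "\<And>k. coeff (monom 1 m - [:a:]) k = skew_mult_coeff \<sigma> g q k"
    using dvd unfolding skew_left_dvd_def by blast
  obtain d where d: "coeff g 1 = \<sigma> d"
    using surjD[OF ring_automorphism_surj[OF \<sigma>]] by blast
  then have "d \<noteq> 0"
    using coeff_1_neq_0_if_degree_1[OF g] ring_automorphism_0[OF \<sigma>] by auto
  define b where "b = - coeff g 0 * inverse d"
  define w where "w k = d * coeff q k" for k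
  have g0: "coeff g 0 * coeff q k = - b * w k" for k
  proof -
    have "inverse d * (d * coeff q k) = coeff q k"
      using \<open>d \<noteq> 0\<close> by (simp flip: mult.assoc)
    then show ?thesis
      by (simp add: b_def w_def mult.assoc)
  qed
  have rec: "of_bool (Suc k = m) = \<sigma> (w k) - b * w (Suc k)" for k
  proof -
    have "of_bool (Suc k = m) = coeff g 0 * coeff q (Suc k) + coeff g 1 * \<sigma> (coeff q k)"
      using q[of "Suc k"] by (simp only: skew_mult_coeff_linear_left_Suc g coeff_monom_minus_const_Suc)
    also have "\<dots> = \<sigma> (w k) - b * w (Suc k)"
      unfolding d g0 w_def by (simp add: ring_automorphismD(2)[OF \<sigma>])
    finally show ?thesis .
  qed
  have const: "of_bool (m = 0) - a = - b * w 0"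
    using q[of 0] g0[of 0] by (simp only: skew_mult_coeff_0 coeff_monom_minus_const_0)
  have "coeff q k = 0" if "m \<le> k" for k
  proof (rule coeff_eq_0_downward[OF _ that])
    fix j assume "m \<le> j" and "coeff q (Suc j) = 0"
    then have "\<sigma> (w j) = 0"
      using rec[of j] by (simp add: w_def)
    then show "coeff q j = 0"
      using \<open>d \<noteq> 0\<close> by (simp add: ring_automorphism_eq_0_iff[OF \<sigma>] w_def)
  qed
  then show ?thesis
    using norm_of_left_recurrence[OF \<sigma> rec const] by (simp add: w_def)
qed

lemma norm_if_linear_skew_right_dvd:
  assumes \<sigma>: "ring_automorphism \<sigma>" and g: "degree g = 1"
    and dvd: "skew_right_dvd \<sigma> g (monom 1 m - [:a:])"
  shows "\<exists>c. a = orbit_prod \<sigma> c 0 m"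
proof -
  obtain q where q: "\<And>k. coeff (monom 1 m - [:a:]) k = skew_mult_coeff \<sigma> q g k"
    using dvd unfolding skew_right_dvd_def by blast
  note \<sigma>k = ring_automorphism_funpow[OF \<sigma>]
  define c where "c = - inverse (coeff g 1) * coeff g 0"
  define u where "u k = coeff q k * (\<sigma> ^^ k) (coeff g 1)" for k
  have "coeff g 0 = - (coeff g 1 * c)"
    using coeff_1_neq_0_if_degree_1[OF g] by (simp add: c_def flip: mult.assoc)
  then have g0: "coeff q k * (\<sigma> ^^ k) (coeff g 0) = - u k * (\<sigma> ^^ k) c" for k
    using ring_automorphism_minus[OF \<sigma>k] by (simp add: u_def ring_automorphismD(2)[OF \<sigma>k] mult.assoc)
  have rec: "of_bool (Suc k = m) = u k - u (Suc k) * (\<sigma> ^^ Suc k) c" for k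
  proof -
    have "of_bool (Suc k = m)
        = coeff q (Suc k) * (\<sigma> ^^ Suc k) (coeff g 0) + coeff q k * (\<sigma> ^^ k) (coeff g 1)"
      using q[of "Suc k"]
      by (simp only: skew_mult_coeff_linear_right_Suc g \<sigma> order_refl coeff_monom_minus_const_Suc)
    also have "\<dots> = u k - u (Suc k) * (\<sigma> ^^ Suc k) c"
      unfolding g0 u_def by simp
    finally show ?thesis .
  qed
  have const: "of_bool (m = 0) - a = - u 0 * c"
    using q[of 0] g0[of 0] by (simp only: skew_mult_coeff_0 coeff_monom_minus_const_0 funpow_0)
  have "coeff q k = 0" if "m \<le> k" for k
  proof (rule coeff_eq_0_downward[OF _ that])
    fix j assume "m \<le> j" and "coeff q (Suc j) = 0"
    then have "u j = 0"
      using rec[of j] by (simp add: u_def)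
    then show "coeff q j = 0"
      using coeff_1_neq_0_if_degree_1[OF g] by (simp add: u_def ring_automorphism_eq_0_iff[OF \<sigma>k])
  qed
  then show ?thesis
    using norm_of_right_recurrence[OF rec const] by (simp add: u_def)
qed

lemma ex_linear_skew_left_dvd_iff_norm:
  "ring_automorphism \<sigma> \<Longrightarrow>
    (\<exists>g. degree g = 1 \<and> skew_left_dvd \<sigma> g (monom 1 m - [:a:])) \<longleftrightarrow> (\<exists>c. a = orbit_prod \<sigma> c 0 m)"
  using ex_linear_skew_left_dvd_if_norm norm_if_linear_skew_left_dvd by metis

lemma ex_linear_skew_right_dvd_iff_norm:
  "ring_automorphism \<sigma> \<Longrightarrow>
    (\<exists>g. degree g = 1 \<and> skew_right_dvd \<sigma> g (monom 1 m - [:a:])) \<longleftrightarrow> (\<exists>c. a = orbit_prod \<sigma> c 0 m)"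
  using ex_linear_skew_right_dvd_if_norm norm_if_linear_skew_right_dvd by metis

theorem mainTheorem13:
  fixes \<sigma> :: "'a::division_ring \<Rightarrow> 'a" and a :: 'a and m :: nat
  assumes "ring_automorphism \<sigma>"
  shows "(\<exists>g. degree g = 1 \<and> skew_left_dvd \<sigma> g (monom 1 m - [:a:]))
     \<longleftrightarrow> (\<exists>g. degree g = 1 \<and> skew_right_dvd \<sigma> g (monom 1 m - [:a:]))"
  using ex_linear_skew_left_dvd_iff_norm[OF assms] ex_linear_skew_right_dvd_iff_norm[OF assms]
  by simp

end
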